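(* Let $G$ be a finite group, $\alpha\colon G^3\to\mathrm{U}(1)$ a normalized 3-cocycle, $\mathcal{G}=\mathcal{G}(G,\mathrm{U}(1),\alpha)$, and $\Sigma$ a connected closed oriented surface of genus $\geq1$. Fix a homomorphism $\tilde\rho\colon\pi_1\Sigma\to G$ and let $(\tilde\rho,\tilde\gamma)$ and $(\tilde\rho,\tilde\gamma')$ be two weak representations $\pi_1\Sigma\to\mathcal{G}$ lifting $\tilde\rho$. Then the corresponding flat $\mathcal{G}$-bundles are isomorphic over the identity of the underlying $G$-bundle (i.e. there is a 1-isomorphism between the weak representations whose underlying element of $G$ is $1$) if and only if $\langle\Psi_\Sigma,\tilde\gamma\rangle=\langle\Psi_\Sigma,\tilde\gamma'\rangle$ in $\mathrm{U}(1)$, where $\Psi_\Sigma$ is a cycle representing the fundamental class in $H_2(\pi_1\Sigma;\mathbb{Z})$.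
   Context: $\mathcal{G}(G,\mathrm{U}(1),\alpha)$ is the monoidal groupoid with objects $G$, automorphisms of each object $\mathrm{U}(1)$ (no other morphisms), $g\otimes h=gh$, associator given by $\alpha$. A weak representation (monoidal functor) $\pi_1\Sigma\to\mathcal{G}$ lifting $\tilde\rho$ is a normalized 2-cochain $\tilde\gamma\colon(\pi_1\Sigma)^2\to\mathrm{U}(1)$ with $d\tilde\gamma=\tilde\rho^*\alpha$, where $(d\tilde\gamma)(a,b,c)=\tilde\gamma(b,c)\tilde\gamma(ab,c)^{-1}\tilde\gamma(a,bc)\tilde\gamma(a,b)^{-1}$ and $\tilde\rho^*\alpha(a,b,c)=\alpha(\tilde\rho a,\tilde\rho b,\tilde\rho c)$. A 1-isomorphism $(\tilde\rho,\tilde\gamma)\to(\tilde\rho',\tilde\gamma')$ is a monoidal natural isomorphism, given by $\tilde h\in G$ with $\tilde h\tilde\rho\tilde h^{-1}=\tilde\rho'$ and $\tilde\eta\colon\pi_1\Sigma\to\mathrm{U}(1)$ satisfying the monoidality condition. The pairing $\langle\Psi_\Sigma,\tilde\gamma\rangle$ is the group-(co)homology pairing, well defined since $d\tilde\gamma$ pulls back from $G$ and is the same for both lifts; for genus 1 with $\pi_1\Sigma=\mathbb{Z}^2=\langle e_1,e_2\rangle$ and $\Psi_\Sigma=e_1\otimes e_2-e_2\otimes e_1$ it equals $\tilde\gamma(e_1,e_2)/\tilde\gamma(e_2,e_1)$. *)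

theory Defs
  imports "HOL-Algebra.Group" Complex_Main
begin

text \<open>Letters: (i, False) is the generator x_i, (i, True) its inverse.
  Generators x_(2i) = a_i, x_(2i+1) = b_i for i < g.\<close>

type_synonym letter = "nat \<times> bool"

definition words :: "nat \<Rightarrow> letter list set" where
  "words g = {w. \<forall>x\<in>set w. fst x < 2 * g}"

fun inv_letter :: "letter \<Rightarrow> letter" where
  "inv_letter (i, b) = (i, \<not> b)"

definition surf_relator :: "nat \<Rightarrow> letter list" where
  "surf_relator g =
     concat (map (\<lambda>i. [(2*i, False), (2*i+1, False), (2*i, True), (2*i+1, True)]) [0..<g])"

inductive_set surf_step :: "nat \<Rightarrow> (letter list \<times> letter list) set" for g where
  cancel: "u \<in> words g \<Longrightarrow> v \<in> words g \<Longrightarrow> fst x < 2 * g \<Longrightarrow>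
           (u @ [x, inv_letter x] @ v, u @ v) \<in> surf_step g"
| relator: "u \<in> words g \<Longrightarrow> v \<in> words g \<Longrightarrow>
           (u @ surf_relator g @ v, u @ v) \<in> surf_step g"

definition surf_rel :: "nat \<Rightarrow> (letter list \<times> letter list) set" where
  "surf_rel g = (surf_step g \<union> (surf_step g)\<inverse>)\<^sup>* \<inter> (words g \<times> words g)"

definition surface_group :: "nat \<Rightarrow> letter list set monoid" where
  "surface_group g =
     \<lparr> carrier = words g // surf_rel g,
       mult = (\<lambda>X Y. \<Union>x\<in>X. \<Union>y\<in>Y. surf_rel g `` {x @ y}),
       one = surf_rel g `` {[]} \<rparr>"

definition surf_class :: "nat \<Rightarrow> letter list \<Rightarrow> letter list set" where
  "surf_class g w = surf_rel g `` {w}"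

definition normalized_3cocycle ::
  "('g, 'b) monoid_scheme \<Rightarrow> ('g \<Rightarrow> 'g \<Rightarrow> 'g \<Rightarrow> complex) \<Rightarrow> bool" where
  "normalized_3cocycle G \<alpha> \<longleftrightarrow>
     (\<forall>a\<in>carrier G. \<forall>b\<in>carrier G. \<forall>c\<in>carrier G. cmod (\<alpha> a b c) = 1) \<and>
     (\<forall>a\<in>carrier G. \<forall>b\<in>carrier G. \<forall>c\<in>carrier G.
        (a = \<one>\<^bsub>G\<^esub> \<or> b = \<one>\<^bsub>G\<^esub> \<or> c = \<one>\<^bsub>G\<^esub>) \<longrightarrow> \<alpha> a b c = 1) \<and>
     (\<forall>a\<in>carrier G. \<forall>b\<in>carrier G. \<forall>c\<in>carrier G. \<forall>d\<in>carrier G.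
        \<alpha> b c d * \<alpha> a (b \<otimes>\<^bsub>G\<^esub> c) d * \<alpha> a b c
        = \<alpha> (a \<otimes>\<^bsub>G\<^esub> b) c d * \<alpha> a b (c \<otimes>\<^bsub>G\<^esub> d))"

text \<open>A weak representation Gamma -> G(G, U(1), alpha) lifting rho: a normalized
  U(1)-valued 2-cochain gamma with d gamma = rho^* alpha.\<close>
definition weak_rep_lift ::
  "('x, 'c) monoid_scheme \<Rightarrow> ('g, 'b) monoid_scheme \<Rightarrow> ('g \<Rightarrow> 'g \<Rightarrow> 'g \<Rightarrow> complex)
   \<Rightarrow> ('x \<Rightarrow> 'g) \<Rightarrow> ('x \<Rightarrow> 'x \<Rightarrow> complex) \<Rightarrow> bool" where
  "weak_rep_lift \<Gamma> G \<alpha> \<rho> \<gamma> \<longleftrightarrow>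
     (\<forall>a\<in>carrier \<Gamma>. \<forall>b\<in>carrier \<Gamma>. cmod (\<gamma> a b) = 1) \<and>
     (\<forall>a\<in>carrier \<Gamma>. \<gamma> \<one>\<^bsub>\<Gamma>\<^esub> a = 1 \<and> \<gamma> a \<one>\<^bsub>\<Gamma>\<^esub> = 1) \<and>
     (\<forall>a\<in>carrier \<Gamma>. \<forall>b\<in>carrier \<Gamma>. \<forall>c\<in>carrier \<Gamma>.
        \<gamma> b c * inverse (\<gamma> (a \<otimes>\<^bsub>\<Gamma>\<^esub> b) c) * \<gamma> a (b \<otimes>\<^bsub>\<Gamma>\<^esub> c) * inverse (\<gamma> a b)
        = \<alpha> (\<rho> a) (\<rho> b) (\<rho> c))"

text \<open>A 1-isomorphism (monoidal natural isomorphism) (rho, gamma) -> (rho, gamma')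
  whose underlying element h of G is 1: a map eta : Gamma -> U(1) satisfying
  the monoidality condition eta(ab) gamma(a,b) = gamma'(a,b) eta(a) eta(b).\<close>
definition iso_over_identity ::
  "('x, 'c) monoid_scheme \<Rightarrow> ('x \<Rightarrow> 'x \<Rightarrow> complex) \<Rightarrow> ('x \<Rightarrow> 'x \<Rightarrow> complex) \<Rightarrow> bool" where
  "iso_over_identity \<Gamma> \<gamma> \<gamma>' \<longleftrightarrow>
     (\<exists>\<eta> :: 'x \<Rightarrow> complex.
        (\<forall>a\<in>carrier \<Gamma>. cmod (\<eta> a) = 1) \<and>
        (\<forall>a\<in>carrier \<Gamma>. \<forall>b\<in>carrier \<Gamma>.
           \<eta> (a \<otimes>\<^bsub>\<Gamma>\<^esub> b) * \<gamma> a b = \<gamma>' a b * \<eta> a * \<eta> b))"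

text \<open>A 2-chain is a formal integer combination of bar symbols [a|b], given as a list
  of (coefficient, a, b).\<close>
definition chain_pairing :: "(int \<times> 'x \<times> 'x) list \<Rightarrow> ('x \<Rightarrow> 'x \<Rightarrow> complex) \<Rightarrow> complex" where
  "chain_pairing \<Psi> \<gamma> = prod_list (map (\<lambda>(c, a, b). \<gamma> a b powi c) \<Psi>)"

text \<open>Its boundary vanishes and it represents the fundamental class in H_2(pi_1 Sigma; Z).\<close>
definition surface_fundamental_cycle ::
  "nat \<Rightarrow> (int \<times> letter list set \<times> letter list set) list" where
  "surface_fundamental_cycle g =
     (let r = surf_relator g in
       map (\<lambda>k. (1, surf_class g (take k r), surf_class g [r ! k])) [1..<length r]
     @ map (\<lambda>i. (-1, surf_class g [(i, False)], surf_class g [(i, True)])) [0..<2*g])"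

end

theory Submission
  imports Defs
begin

text \<open>
  The ratio \<open>\<delta> = \<gamma>'/\<gamma>\<close> of two lifts of the same \<open>\<rho>\<close> is a normalized \<open>U(1)\<close>-valued
  2-cocycle on \<open>\<pi>\<^sub>1\<Sigma>\<close>, because \<open>\<rho>\<^sup>*\<alpha>\<close> cancels, and a 1-isomorphism over the
  identity is exactly a \<open>U(1)\<close>-valued \<open>\<eta>\<close> with \<open>\<eta>(ab) = \<delta>(a,b) \<eta>(a) \<eta>(b)\<close>.
  To find \<open>\<eta>\<close>, define a weight \<open>W\<close> on words by multiplying \<open>\<delta>(prefix, next letter)\<close>
  along the word, corrected on inverse letters so that \<open>W(x x\<^sup>-\<^sup>1) = 1\<close>. The cocycle
  identity gives \<open>W(uv) = W(u) W(v) \<delta>(u,v)\<close>, so \<open>W\<close> descends to the surface group, and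
  is then the required \<open>\<eta>\<close>, as soon as it is trivial on the relator. Conversely, if \<open>\<eta>\<close>
  exists then \<open>W/\<eta>\<close> is multiplicative on words and trivial on cancelling pairs, hence on
  the relator, in which every generator occurs once with each sign. Finally \<open>W(relator)\<close> is, term
  by term, the pairing of \<open>\<delta>\<close> with the fundamental cycle \<open>\<Psi>\<^sub>\<Sigma>\<close>, and the pairing of
  \<open>\<gamma>'/\<gamma>\<close> is the quotient of the pairings.
\<close>

lemma rtrancl_map:
  assumes "\<And>x y. (x, y) \<in> r \<Longrightarrow> (f x, f y) \<in> r" and "(a, b) \<in> r\<^sup>*"
  shows "(f a, f b) \<in> r\<^sup>*"
  using assms(2) by induction (auto intro: rtrancl_into_rtrancl assms(1))

section \<open>The surface group as a quotient of words\<close>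

lemma words_Nil [simp]: "[] \<in> words g"
  by (simp add: words_def)

lemma words_Cons [simp]: "x # w \<in> words g \<longleftrightarrow> fst x < 2 * g \<and> w \<in> words g"
  by (auto simp: words_def)

lemma words_append [simp]: "u @ v \<in> words g \<longleftrightarrow> u \<in> words g \<and> v \<in> words g"
  by (auto simp: words_def)

lemma words_take: "w \<in> words g \<Longrightarrow> take k w \<in> words g"
  by (auto simp: words_def dest: in_set_takeD)

lemma words_nth: "w \<in> words g \<Longrightarrow> k < length w \<Longrightarrow> fst (w ! k) < 2 * g"
  by (auto simp: words_def)

lemma surf_relator_in_words [simp]: "surf_relator g \<in> words g"
  by (auto simp: words_def surf_relator_def)

lemma fst_inv_letter [simp]: "fst (inv_letter x) = fst x"
  by (cases x) simp

lemma prod_list_surf_relator: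
  "prod_list (map (f :: letter \<Rightarrow> 'a :: comm_monoid_mult) (surf_relator g))
     = (\<Prod>i<2 * g. f (i, False) * f (i, True))"
proof (induction g)
  case 0
  then show ?case by (simp add: surf_relator_def)
next
  case (Suc g)
  have "surf_relator (Suc g)
          = surf_relator g @ [(2*g, False), (2*g+1, False), (2*g, True), (2*g+1, True)]"
    by (simp add: surf_relator_def)
  moreover have "2 * Suc g = Suc (Suc (2 * g))" by simp
  ultimately show ?case using Suc by (simp add: mult_ac)
qed

lemma surf_step_words: "(a, b) \<in> surf_step g \<Longrightarrow> a \<in> words g \<and> b \<in> words g"
  by (induction rule: surf_step.induct) auto

lemma surf_step_context:
  "(a, b) \<in> surf_step g \<Longrightarrow> u \<in> words g \<Longrightarrow> v \<in> words g \<Longrightarrow>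
   (u @ a @ v, u @ b @ v) \<in> surf_step g"
proof (induction rule: surf_step.induct)
  case (cancel u' v' x)
  then show ?case using surf_step.cancel[of "u @ u'" g "v' @ v" x] by simp
next
  case (relator u' v')
  then show ?case using surf_step.relator[of "u @ u'" g "v' @ v"] by simp
qed

lemma equiv_surf_rel: "equiv (words g) (surf_rel g)"
proof (rule equivI)
  show "refl_on (words g) (surf_rel g)"
    by (auto simp: refl_on_def surf_rel_def)
  have "sym ((surf_step g \<union> (surf_step g)\<inverse>)\<^sup>*)"
    by (simp add: sym_Un_converse sym_rtrancl)
  then show "sym (surf_rel g)"
    unfolding surf_rel_def sym_def by blast
  show "trans (surf_rel g)"
    unfolding surf_rel_def trans_def by (auto intro: rtrancl_trans)
qed (auto simp: surf_rel_def)

lemma surf_rel_context: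
  assumes "(a, b) \<in> surf_rel g" and "u \<in> words g" and "v \<in> words g"
  shows "(u @ a @ v, u @ b @ v) \<in> surf_rel g"
proof -
  let ?S = "surf_step g \<union> (surf_step g)\<inverse>"
  have "(u @ x @ v, u @ y @ v) \<in> ?S" if "(x, y) \<in> ?S" for x y
    using that surf_step_context assms(2,3) by blast
  moreover have "(a, b) \<in> ?S\<^sup>*"
    using assms(1) by (simp add: surf_rel_def)
  ultimately have "(u @ a @ v, u @ b @ v) \<in> ?S\<^sup>*"
    by (rule rtrancl_map)
  then show ?thesis
    using assms by (auto simp: surf_rel_def)
qed

lemma surf_rel_append:
  assumes "(a, a') \<in> surf_rel g" and "(b, b') \<in> surf_rel g"
  shows "(a @ b, a' @ b') \<in> surf_rel g"
proof -
  have words: "a' \<in> words g" "b \<in> words g"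
    using assms by (auto simp: surf_rel_def)
  have "(a @ b, a' @ b) \<in> surf_rel g"
    using surf_rel_context[OF assms(1) words_Nil words(2)] by simp
  moreover have "(a' @ b, a' @ b') \<in> surf_rel g"
    using surf_rel_context[OF assms(2) words(1) words_Nil] by simp
  ultimately show ?thesis
    using equiv_surf_rel by (meson equivE transD)
qed

lemma surf_class_in_carrier [simp]: "w \<in> words g \<Longrightarrow> surf_class g w \<in> carrier (surface_group g)"
  by (simp add: surface_group_def surf_class_def quotientI)

lemma surface_group_carrierE:
  assumes "A \<in> carrier (surface_group g)"
  obtains w where "w \<in> words g" and "A = surf_class g w"
  using assms by (auto simp: surface_group_def surf_class_def quotient_def)

lemma one_surface_group: "\<one>\<^bsub>surface_group g\<^esub> = surf_class g []"
  by (simp add: surface_group_def surf_class_def)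

lemma surf_class_eq_iff:
  "w \<in> words g \<Longrightarrow> w' \<in> words g \<Longrightarrow> surf_class g w = surf_class g w' \<longleftrightarrow> (w, w') \<in> surf_rel g"
  unfolding surf_class_def by (rule eq_equiv_class_iff[OF equiv_surf_rel])

lemma surf_class_self: "w \<in> words g \<Longrightarrow> w \<in> surf_class g w"
  using equiv_surf_rel by (auto simp: surf_class_def equiv_def refl_on_def)

lemma surf_class_mult:
  assumes "w \<in> words g" and "v \<in> words g"
  shows "surf_class g w \<otimes>\<^bsub>surface_group g\<^esub> surf_class g v = surf_class g (w @ v)"
proof -
  have "(\<Union>x\<in>surf_class g w. \<Union>y\<in>surf_class g v. surf_rel g `` {x @ y}) = surf_class g (w @ v)"
  proof (intro equalityI subsetI)
    fix z assume "z \<in> (\<Union>x\<in>surf_class g w. \<Union>y\<in>surf_class g v. surf_rel g `` {x @ y})"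
    then obtain x y where "(w, x) \<in> surf_rel g" "(v, y) \<in> surf_rel g" "(x @ y, z) \<in> surf_rel g"
      by (auto simp: surf_class_def)
    then show "z \<in> surf_class g (w @ v)"
      using surf_rel_append equiv_surf_rel unfolding surf_class_def by (meson Image_singleton_iff equivE transD)
  next
    fix z assume "z \<in> surf_class g (w @ v)"
    then show "z \<in> (\<Union>x\<in>surf_class g w. \<Union>y\<in>surf_class g v. surf_rel g `` {x @ y})"
      using assms surf_class_self by (auto simp: surf_class_def)
  qed
  then show ?thesis
    by (simp add: surface_group_def surf_class_def)
qed

lemma surf_class_step: "(a, b) \<in> surf_step g \<Longrightarrow> surf_class g a = surf_class g b"
  using surf_step_words surf_class_eq_iff by (fastforce simp: surf_rel_def)

lemma surf_class_cancel: "fst x < 2 * g \<Longrightarrow> surf_class g [x, inv_letter x] = surf_class g []"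
  using surf_class_step[OF surf_step.cancel[of "[]" g "[]" x]] by simp

lemma surf_class_relator: "surf_class g (surf_relator g) = surf_class g []"
  using surf_class_step[OF surf_step.relator[of "[]" g "[]"]] by simp

lemma monoid_surface_group: "monoid (surface_group g)"
proof (rule monoidI)
  fix A B C
  assume A: "A \<in> carrier (surface_group g)" and B: "B \<in> carrier (surface_group g)"
    and C: "C \<in> carrier (surface_group g)"
  from A B C obtain u v w where "u \<in> words g" "v \<in> words g" "w \<in> words g"
    and "A = surf_class g u" "B = surf_class g v" "C = surf_class g w"
    by (metis surface_group_carrierE)
  then show "A \<otimes>\<^bsub>surface_group g\<^esub> B \<in> carrier (surface_group g)"
    and "A \<otimes>\<^bsub>surface_group g\<^esub> B \<otimes>\<^bsub>surface_group g\<^esub> C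
           = A \<otimes>\<^bsub>surface_group g\<^esub> (B \<otimes>\<^bsub>surface_group g\<^esub> C)"
    and "\<one>\<^bsub>surface_group g\<^esub> \<otimes>\<^bsub>surface_group g\<^esub> A = A"
    and "A \<otimes>\<^bsub>surface_group g\<^esub> \<one>\<^bsub>surface_group g\<^esub> = A"
    by (simp_all add: surf_class_mult one_surface_group)
qed (simp add: one_surface_group)

section \<open>Normalized 2-cocycles and the pairing with chains\<close>

definition normalized_2cocycle :: "('x, 'c) monoid_scheme \<Rightarrow> ('x \<Rightarrow> 'x \<Rightarrow> complex) \<Rightarrow> bool" where
  "normalized_2cocycle \<Gamma> \<delta> \<longleftrightarrow>
     (\<forall>a\<in>carrier \<Gamma>. \<forall>b\<in>carrier \<Gamma>. cmod (\<delta> a b) = 1) \<and>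
     (\<forall>a\<in>carrier \<Gamma>. \<delta> \<one>\<^bsub>\<Gamma>\<^esub> a = 1 \<and> \<delta> a \<one>\<^bsub>\<Gamma>\<^esub> = 1) \<and>
     (\<forall>a\<in>carrier \<Gamma>. \<forall>b\<in>carrier \<Gamma>. \<forall>c\<in>carrier \<Gamma>.
        \<delta> b c * \<delta> a (b \<otimes>\<^bsub>\<Gamma>\<^esub> c) = \<delta> (a \<otimes>\<^bsub>\<Gamma>\<^esub> b) c * \<delta> a b)"

definition u1_coboundary :: "('x, 'c) monoid_scheme \<Rightarrow> ('x \<Rightarrow> 'x \<Rightarrow> complex) \<Rightarrow> bool" where
  "u1_coboundary \<Gamma> \<delta> \<longleftrightarrow>
     (\<exists>\<eta>. (\<forall>a\<in>carrier \<Gamma>. cmod (\<eta> a) = 1) \<and>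
          (\<forall>a\<in>carrier \<Gamma>. \<forall>b\<in>carrier \<Gamma>. \<eta> (a \<otimes>\<^bsub>\<Gamma>\<^esub> b) = \<delta> a b * \<eta> a * \<eta> b))"

lemma weak_rep_lift_ratio_cocycle:
  assumes "monoid \<Gamma>"
    and \<gamma>: "weak_rep_lift \<Gamma> G \<alpha> \<rho> \<gamma>" and \<gamma>': "weak_rep_lift \<Gamma> G \<alpha> \<rho> \<gamma>'"
  shows "normalized_2cocycle \<Gamma> (\<lambda>a b. \<gamma>' a b / \<gamma> a b)"
  unfolding normalized_2cocycle_def
proof (intro conjI ballI)
  have unit: "cmod (\<gamma> a b) = 1" "cmod (\<gamma>' a b) = 1"
    if "a \<in> carrier \<Gamma>" "b \<in> carrier \<Gamma>" for a b
    using \<gamma> \<gamma>' that by (auto simp: weak_rep_lift_def)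
  then have nonzero: "\<gamma> a b \<noteq> 0" "\<gamma>' a b \<noteq> 0" if "a \<in> carrier \<Gamma>" "b \<in> carrier \<Gamma>" for a b
    using that by fastforce+
  fix a b c assume a: "a \<in> carrier \<Gamma>" and b: "b \<in> carrier \<Gamma>" and c: "c \<in> carrier \<Gamma>"
  show "cmod (\<gamma>' a b / \<gamma> a b) = 1"
    using unit[OF a b] by (simp add: norm_divide)
  show "\<gamma>' \<one>\<^bsub>\<Gamma>\<^esub> a / \<gamma> \<one>\<^bsub>\<Gamma>\<^esub> a = 1" "\<gamma>' a \<one>\<^bsub>\<Gamma>\<^esub> / \<gamma> a \<one>\<^bsub>\<Gamma>\<^esub> = 1"
    using \<gamma> \<gamma>' a by (simp_all add: weak_rep_lift_def)
  have ab: "a \<otimes>\<^bsub>\<Gamma>\<^esub> b \<in> carrier \<Gamma>" and bc: "b \<otimes>\<^bsub>\<Gamma>\<^esub> c \<in> carrier \<Gamma>"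
    using a b c \<open>monoid \<Gamma>\<close> by (simp_all add: monoid.m_closed)
  have "\<gamma> b c * inverse (\<gamma> (a \<otimes>\<^bsub>\<Gamma>\<^esub> b) c) * \<gamma> a (b \<otimes>\<^bsub>\<Gamma>\<^esub> c) * inverse (\<gamma> a b)
      = \<gamma>' b c * inverse (\<gamma>' (a \<otimes>\<^bsub>\<Gamma>\<^esub> b) c) * \<gamma>' a (b \<otimes>\<^bsub>\<Gamma>\<^esub> c) * inverse (\<gamma>' a b)"
    using \<gamma> \<gamma>' a b c by (simp add: weak_rep_lift_def)
  then show "\<gamma>' b c / \<gamma> b c * (\<gamma>' a (b \<otimes>\<^bsub>\<Gamma>\<^esub> c) / \<gamma> a (b \<otimes>\<^bsub>\<Gamma>\<^esub> c))
      = \<gamma>' (a \<otimes>\<^bsub>\<Gamma>\<^esub> b) c / \<gamma> (a \<otimes>\<^bsub>\<Gamma>\<^esub> b) c * (\<gamma>' a b / \<gamma> a b)"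
    using nonzero[OF b c] nonzero[OF ab c] nonzero[OF a bc] nonzero[OF a b]
    by (simp add: field_simps)
qed

lemma normalized_2cocycle_inverse_commute:
  assumes "normalized_2cocycle \<Gamma> \<delta>" and "a \<in> carrier \<Gamma>" and "b \<in> carrier \<Gamma>"
    and "a \<otimes>\<^bsub>\<Gamma>\<^esub> b = \<one>\<^bsub>\<Gamma>\<^esub>" and "b \<otimes>\<^bsub>\<Gamma>\<^esub> a = \<one>\<^bsub>\<Gamma>\<^esub>"
  shows "\<delta> b a = \<delta> a b"
proof -
  have "\<delta> b a * \<delta> a (b \<otimes>\<^bsub>\<Gamma>\<^esub> a) = \<delta> (a \<otimes>\<^bsub>\<Gamma>\<^esub> b) a * \<delta> a b"
    using assms(1-3) by (simp add: normalized_2cocycle_def)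
  then show ?thesis
    using assms by (simp add: normalized_2cocycle_def)
qed

lemma iso_over_identity_iff_coboundary:
  assumes "\<forall>a\<in>carrier \<Gamma>. \<forall>b\<in>carrier \<Gamma>. \<gamma> a b \<noteq> 0"
  shows "iso_over_identity \<Gamma> \<gamma> \<gamma>' \<longleftrightarrow> u1_coboundary \<Gamma> (\<lambda>a b. \<gamma>' a b / \<gamma> a b)"
proof -
  have "\<eta> (a \<otimes>\<^bsub>\<Gamma>\<^esub> b) * \<gamma> a b = \<gamma>' a b * \<eta> a * \<eta> b
          \<longleftrightarrow> \<eta> (a \<otimes>\<^bsub>\<Gamma>\<^esub> b) = \<gamma>' a b / \<gamma> a b * \<eta> a * \<eta> b"
    if "a \<in> carrier \<Gamma>" "b \<in> carrier \<Gamma>" for \<eta> a b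
    using assms that by (auto simp: field_simps)
  then show ?thesis
    unfolding iso_over_identity_def u1_coboundary_def by (intro ex_cong1) auto
qed

lemma chain_pairing_divide:
  "chain_pairing \<Psi> (\<lambda>a b. f a b / h a b) = chain_pairing \<Psi> f / chain_pairing \<Psi> h"
  by (induction \<Psi>) (auto simp: chain_pairing_def power_int_divide_distrib)

lemma chain_pairing_nonzero:
  "\<forall>(c, a, b)\<in>set \<Psi>. \<gamma> a b \<noteq> 0 \<Longrightarrow> chain_pairing \<Psi> \<gamma> \<noteq> 0"
  by (induction \<Psi>) (auto simp: chain_pairing_def)

lemma surface_fundamental_cycle_in_carrier:
  assumes "(c, a, b) \<in> set (surface_fundamental_cycle g)"
  shows "a \<in> carrier (surface_group g)" and "b \<in> carrier (surface_group g)"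
proof -
  let ?r = "surf_relator g"
  from assms consider k where "k < length ?r" "a = surf_class g (take k ?r)" "b = surf_class g [?r ! k]"
    | i where "i < 2 * g" "a = surf_class g [(i, False)]" "b = surf_class g [(i, True)]"
    unfolding surface_fundamental_cycle_def Let_def by auto
  then have "a \<in> carrier (surface_group g) \<and> b \<in> carrier (surface_group g)"
    by cases (simp_all add: words_take words_nth[OF surf_relator_in_words])
  then show "a \<in> carrier (surface_group g)" and "b \<in> carrier (surface_group g)"
    by simp_all
qed

section \<open>Trivializing a 2-cocycle on the surface group along words\<close>

definition letter_weight ::
  "nat \<Rightarrow> (letter list set \<Rightarrow> letter list set \<Rightarrow> complex) \<Rightarrow> letter \<Rightarrow> complex" where
  "letter_weight g \<delta> l =
     (if snd l then inverse (\<delta> (surf_class g [(fst l, False)]) (surf_class g [(fst l, True)])) else 1)"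

definition word_weight ::
  "nat \<Rightarrow> (letter list set \<Rightarrow> letter list set \<Rightarrow> complex) \<Rightarrow> letter list \<Rightarrow> complex" where
  "word_weight g \<delta> w =
     (\<Prod>k<length w. letter_weight g \<delta> (w ! k) * \<delta> (surf_class g (take k w)) (surf_class g [w ! k]))"

lemma word_weight_Nil [simp]: "word_weight g \<delta> [] = 1"
  by (simp add: word_weight_def)

lemma word_weight_snoc:
  "word_weight g \<delta> (w @ [l])
     = word_weight g \<delta> w * letter_weight g \<delta> l * \<delta> (surf_class g w) (surf_class g [l])"
  unfolding word_weight_def by (simp add: nth_append)

locale surface_2cocycle =
  fixes g :: nat and \<delta> :: "letter list set \<Rightarrow> letter list set \<Rightarrow> complex"
  assumes normalized_2cocycle: "normalized_2cocycle (surface_group g) \<delta>"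
begin

lemma unit_on_classes:
  "w \<in> words g \<Longrightarrow> v \<in> words g \<Longrightarrow> cmod (\<delta> (surf_class g w) (surf_class g v)) = 1"
  using normalized_2cocycle by (simp add: normalized_2cocycle_def)

lemma nonzero_on_classes:
  "w \<in> words g \<Longrightarrow> v \<in> words g \<Longrightarrow> \<delta> (surf_class g w) (surf_class g v) \<noteq> 0"
  using unit_on_classes by fastforce

lemma normalized_on_classes:
  "w \<in> words g \<Longrightarrow> \<delta> (surf_class g []) (surf_class g w) = 1 \<and> \<delta> (surf_class g w) (surf_class g []) = 1"
  using normalized_2cocycle by (simp add: normalized_2cocycle_def flip: one_surface_group)

lemma cocycle_on_classes:
  assumes "u \<in> words g" and "v \<in> words g" and "w \<in> words g"
  shows "\<delta> (surf_class g v) (surf_class g w) * \<delta> (surf_class g u) (surf_class g (v @ w))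
           = \<delta> (surf_class g (u @ v)) (surf_class g w) * \<delta> (surf_class g u) (surf_class g v)"
  using normalized_2cocycle assms by (simp add: normalized_2cocycle_def flip: surf_class_mult)

lemma word_weight_append:
  "w \<in> words g \<Longrightarrow> v \<in> words g \<Longrightarrow>
   word_weight g \<delta> (w @ v) = word_weight g \<delta> w * word_weight g \<delta> v * \<delta> (surf_class g w) (surf_class g v)"
proof (induction v rule: rev_induct)
  case Nil
  then show ?case by (simp add: normalized_on_classes)
next
  case (snoc l v)
  then have v: "v \<in> words g" and l: "[l] \<in> words g" by auto
  have "word_weight g \<delta> (w @ v @ [l])
          = word_weight g \<delta> (w @ v) * letter_weight g \<delta> l * \<delta> (surf_class g (w @ v)) (surf_class g [l])"
    using word_weight_snoc[of g \<delta> "w @ v" l] by simp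
  also have "\<dots> = word_weight g \<delta> w * word_weight g \<delta> v * letter_weight g \<delta> l *
     (\<delta> (surf_class g (w @ v)) (surf_class g [l]) * \<delta> (surf_class g w) (surf_class g v))"
    using snoc v by (simp add: mult_ac)
  also have "\<dots> = word_weight g \<delta> w * word_weight g \<delta> v * letter_weight g \<delta> l *
     (\<delta> (surf_class g v) (surf_class g [l]) * \<delta> (surf_class g w) (surf_class g (v @ [l])))"
    using cocycle_on_classes[OF snoc.prems(1) v l] by simp
  also have "\<dots> = word_weight g \<delta> w * word_weight g \<delta> (v @ [l]) * \<delta> (surf_class g w) (surf_class g (v @ [l]))"
    by (simp add: word_weight_snoc mult_ac)
  finally show ?case by simp
qed

lemma word_weight_cancel:
  assumes "fst x < 2 * g"
  shows "word_weight g \<delta> [x, inv_letter x] = 1"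
proof -
  obtain i b where x: "x = (i, b)" by (cases x)
  let ?a = "surf_class g [(i, False)]" and ?a' = "surf_class g [(i, True)]"
  have i: "i < 2 * g" using assms x by simp
  have "?a \<otimes>\<^bsub>surface_group g\<^esub> ?a' = \<one>\<^bsub>surface_group g\<^esub>"
       "?a' \<otimes>\<^bsub>surface_group g\<^esub> ?a = \<one>\<^bsub>surface_group g\<^esub>"
    using surf_class_cancel[of "(i, False)" g] surf_class_cancel[of "(i, True)" g] i
    by (simp_all add: surf_class_mult one_surface_group)
  then have "\<delta> ?a' ?a = \<delta> ?a ?a'"
    using normalized_2cocycle_inverse_commute[OF normalized_2cocycle] i by simp
  moreover have "word_weight g \<delta> [x, inv_letter x]
                   = letter_weight g \<delta> x * letter_weight g \<delta> (inv_letter x) * \<delta> (surf_class g [x]) (surf_class g [inv_letter x])"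
    using word_weight_snoc[of g \<delta> "[]" x] word_weight_snoc[of g \<delta> "[x]" "inv_letter x"]
      normalized_on_classes[of "[x]"] assms by simp
  ultimately show ?thesis
    using x i nonzero_on_classes[of "[(i, False)]" "[(i, True)]"] by (cases b) (simp_all add: letter_weight_def)
qed

lemma word_weight_insert_trivial:
  assumes "m \<in> words g" and "surf_class g m = surf_class g []" and "word_weight g \<delta> m = 1"
    and "u \<in> words g" and "v \<in> words g"
  shows "word_weight g \<delta> (u @ m @ v) = word_weight g \<delta> (u @ v)"
proof -
  have um: "surf_class g (u @ m) = surf_class g u"
    using surf_class_mult[OF assms(4,1)] surf_class_mult[OF assms(4) words_Nil] assms(2) by simp
  have "word_weight g \<delta> (u @ m) = word_weight g \<delta> u"
    using word_weight_append[OF assms(4,1)] assms(2,3) normalized_on_classes[OF assms(4)] by simp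
  then show ?thesis
    using word_weight_append[of "u @ m" v] word_weight_append[OF assms(4,5)] um assms by simp
qed

lemma word_weight_respects_surf_rel:
  assumes relator: "word_weight g \<delta> (surf_relator g) = 1" and "(a, b) \<in> surf_rel g"
  shows "word_weight g \<delta> a = word_weight g \<delta> b"
proof -
  have step: "word_weight g \<delta> x = word_weight g \<delta> y" if "(x, y) \<in> surf_step g" for x y
    using that
  proof (induction rule: surf_step.induct)
    case (cancel u v x)
    then show ?case
      using word_weight_insert_trivial[of "[x, inv_letter x]" u v] word_weight_cancel surf_class_cancel
      by simp
  next
    case (relator u v)
    then show ?case
      using word_weight_insert_trivial[of "surf_relator g" u v] assms(1) surf_class_relator by simp
  qed
  have "(a, b) \<in> (surf_step g \<union> (surf_step g)\<inverse>)\<^sup>*"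
    using assms(2) by (simp add: surf_rel_def)
  then show ?thesis
    by induction (auto dest: step)
qed

lemma letter_weight_unit: "fst l < 2 * g \<Longrightarrow> cmod (letter_weight g \<delta> l) = 1"
  by (simp add: letter_weight_def norm_inverse unit_on_classes)

lemma word_weight_unit:
  assumes "w \<in> words g"
  shows "cmod (word_weight g \<delta> w) = 1"
proof -
  have "cmod (letter_weight g \<delta> (w ! k) * \<delta> (surf_class g (take k w)) (surf_class g [w ! k])) = 1"
    if "k < length w" for k
    using assms that by (simp add: norm_mult letter_weight_unit unit_on_classes words_take words_nth)
  then show ?thesis
    unfolding word_weight_def prod_norm[symmetric] by (intro prod.neutral ballI) simp
qed

lemma word_weight_relator: "word_weight g \<delta> (surf_relator g) = chain_pairing (surface_fundamental_cycle g) \<delta>"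
proof -
  let ?r = "surf_relator g" and ?n = "length (surf_relator g)"
  let ?\<delta>\<^sub>k = "\<lambda>k. \<delta> (surf_class g (take k ?r)) (surf_class g [?r ! k])"
  let ?inv = "\<lambda>i. inverse (\<delta> (surf_class g [(i, False)]) (surf_class g [(i, True)]))"
  have "word_weight g \<delta> ?r = (\<Prod>k<?n. letter_weight g \<delta> (?r ! k)) * (\<Prod>k<?n. ?\<delta>\<^sub>k k)"
    unfolding word_weight_def by (rule prod.distrib)
  also have "(\<Prod>k<?n. letter_weight g \<delta> (?r ! k)) = prod_list (map (letter_weight g \<delta>) ?r)"
    by (simp add: prod.list_conv_set_nth atLeast0LessThan)
  also have "\<dots> = (\<Prod>i<2 * g. ?inv i)"
    by (simp add: prod_list_surf_relator letter_weight_def)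
  also have "(\<Prod>k<?n. ?\<delta>\<^sub>k k) = (\<Prod>k\<in>{1..<?n}. ?\<delta>\<^sub>k k)"
  proof (cases ?n)
    case (Suc m)
    then have "{..<?n} = insert 0 {1..<?n}" by auto
    moreover have "?\<delta>\<^sub>k 0 = 1"
      using Suc normalized_on_classes words_nth[OF surf_relator_in_words] by simp
    ultimately show ?thesis by simp
  qed simp
  also have "(\<Prod>i<2 * g. ?inv i) * (\<Prod>k\<in>{1..<?n}. ?\<delta>\<^sub>k k) = chain_pairing (surface_fundamental_cycle g) \<delta>"
    unfolding chain_pairing_def surface_fundamental_cycle_def Let_def
    by (simp add: o_def power_int_minus atLeast0LessThan mult.commute flip: prod.distinct_set_conv_list)
  finally show ?thesis .
qed

lemma pairing_eq_1_if_coboundary: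
  assumes "u1_coboundary (surface_group g) \<delta>"
  shows "chain_pairing (surface_fundamental_cycle g) \<delta> = 1"
proof -
  let ?c = "surf_class g"
  obtain \<eta> where \<eta>_unit: "\<forall>a\<in>carrier (surface_group g). cmod (\<eta> a) = 1"
    and \<eta>_mult: "\<forall>a\<in>carrier (surface_group g). \<forall>b\<in>carrier (surface_group g).
                    \<eta> (a \<otimes>\<^bsub>surface_group g\<^esub> b) = \<delta> a b * \<eta> a * \<eta> b"
    using assms unfolding u1_coboundary_def by blast
  have \<eta>_nonzero: "\<eta> (?c w) \<noteq> 0" if "w \<in> words g" for w
    using \<eta>_unit surf_class_in_carrier[OF that] by (metis norm_zero zero_neq_one)
  have \<eta>_words: "\<eta> (?c (w @ v)) = \<delta> (?c w) (?c v) * \<eta> (?c w) * \<eta> (?c v)"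
    if "w \<in> words g" "v \<in> words g" for w v
    using \<eta>_mult that by (simp flip: surf_class_mult)
  have \<eta>_one: "\<eta> (?c []) = 1"
    using \<eta>_words[of "[]" "[]"] \<eta>_nonzero[of "[]"] normalized_on_classes[of "[]"] by simp
  \<comment> \<open>\<open>R\<close> is multiplicative because \<open>word_weight\<close> and \<open>\<eta>\<close> have the same defect \<open>\<delta>\<close>.\<close>
  define R where "R w = word_weight g \<delta> w / \<eta> (?c w)" for w
  have R_append: "R (w @ v) = R w * R v" if "w \<in> words g" "v \<in> words g" for w v
    using word_weight_append[OF that] \<eta>_words[OF that] \<eta>_nonzero nonzero_on_classes that
    by (simp add: R_def)
  have R_letters: "R w = (\<Prod>l\<leftarrow>w. R [l])" if "w \<in> words g" for w
    using that
  proof (induction w)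
    case Nil
    then show ?case by (simp add: R_def \<eta>_one)
  next
    case (Cons l w)
    then show ?case using R_append[of "[l]" w] by simp
  qed
  have R_cancel: "R [(i, False)] * R [(i, True)] = 1" if "i < 2 * g" for i
    using R_append[of "[(i, False)]" "[(i, True)]"] word_weight_cancel[of "(i, False)"]
      surf_class_cancel[of "(i, False)" g] \<eta>_one that
    by (simp add: R_def)
  have "R (surf_relator g) = 1"
    using R_letters[OF surf_relator_in_words] R_cancel by (simp add: prod_list_surf_relator)
  then have "word_weight g \<delta> (surf_relator g) = 1"
    by (simp add: R_def surf_class_relator \<eta>_one)
  then show ?thesis
    by (simp add: word_weight_relator)
qed

lemma coboundary_if_pairing_eq_1:
  assumes "chain_pairing (surface_fundamental_cycle g) \<delta> = 1"
  shows "u1_coboundary (surface_group g) \<delta>"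
proof -
  let ?c = "surf_class g"
  have relator: "word_weight g \<delta> (surf_relator g) = 1"
    using assms by (simp add: word_weight_relator)
  define \<eta> where "\<eta> A = word_weight g \<delta> (SOME w. w \<in> A)" for A
  have \<eta>_class: "\<eta> (?c w) = word_weight g \<delta> w" if "w \<in> words g" for w
  proof -
    have "(SOME v. v \<in> ?c w) \<in> ?c w"
      using surf_class_self[OF that] by (rule someI)
    then have "(w, SOME v. v \<in> ?c w) \<in> surf_rel g"
      by (simp add: surf_class_def)
    then show ?thesis
      unfolding \<eta>_def by (simp add: word_weight_respects_surf_rel[OF relator])
  qed
  show ?thesis
    unfolding u1_coboundary_def
  proof (intro exI[of _ \<eta>] conjI ballI)
    fix a assume "a \<in> carrier (surface_group g)"
    then obtain w where "w \<in> words g" "a = ?c w"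
      by (rule surface_group_carrierE)
    then show "cmod (\<eta> a) = 1"
      by (simp add: \<eta>_class word_weight_unit)
  next
    fix a b assume "a \<in> carrier (surface_group g)" "b \<in> carrier (surface_group g)"
    then obtain w v where "w \<in> words g" "a = ?c w" "v \<in> words g" "b = ?c v"
      by (metis surface_group_carrierE)
    then show "\<eta> (a \<otimes>\<^bsub>surface_group g\<^esub> b) = \<delta> a b * \<eta> a * \<eta> b"
      by (simp add: surf_class_mult \<eta>_class word_weight_append mult_ac)
  qed
qed

theorem coboundary_iff_pairing_eq_1:
  "u1_coboundary (surface_group g) \<delta> \<longleftrightarrow> chain_pairing (surface_fundamental_cycle g) \<delta> = 1"
  using pairing_eq_1_if_coboundary coboundary_if_pairing_eq_1 by blast

end

theorem mainTheorem3:
  fixes G :: "('g, 'b) monoid_scheme"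
    and \<alpha> :: "'g \<Rightarrow> 'g \<Rightarrow> 'g \<Rightarrow> complex"
    and g :: nat
    and \<rho> :: "letter list set \<Rightarrow> 'g"
    and \<gamma> \<gamma>' :: "letter list set \<Rightarrow> letter list set \<Rightarrow> complex"
  assumes "group G" and "finite (carrier G)"
    and "normalized_3cocycle G \<alpha>"
    and "g \<ge> 1"
    and "\<rho> \<in> hom (surface_group g) G"
    and "weak_rep_lift (surface_group g) G \<alpha> \<rho> \<gamma>"
    and "weak_rep_lift (surface_group g) G \<alpha> \<rho> \<gamma>'"
  shows "iso_over_identity (surface_group g) \<gamma> \<gamma>' \<longleftrightarrow>
         chain_pairing (surface_fundamental_cycle g) \<gamma>
           = chain_pairing (surface_fundamental_cycle g) \<gamma>'"
proof -
  let ?\<Psi> = "surface_fundamental_cycle g"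
  define \<delta> where "\<delta> = (\<lambda>a b. \<gamma>' a b / \<gamma> a b)"
  have \<gamma>_nonzero: "\<forall>a\<in>carrier (surface_group g). \<forall>b\<in>carrier (surface_group g). \<gamma> a b \<noteq> 0"
    using assms(6) by (fastforce simp: weak_rep_lift_def)
  interpret surface_2cocycle g \<delta>
    using weak_rep_lift_ratio_cocycle[OF monoid_surface_group assms(6,7)]
    by unfold_locales (simp add: \<delta>_def)
  have "chain_pairing ?\<Psi> \<gamma> \<noteq> 0"
    using \<gamma>_nonzero by (intro chain_pairing_nonzero) (auto dest: surface_fundamental_cycle_in_carrier)
  then have "chain_pairing ?\<Psi> \<delta> = 1 \<longleftrightarrow> chain_pairing ?\<Psi> \<gamma> = chain_pairing ?\<Psi> \<gamma>'"
    by (auto simp: \<delta>_def chain_pairing_divide)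
  moreover have "iso_over_identity (surface_group g) \<gamma> \<gamma>' \<longleftrightarrow> u1_coboundary (surface_group g) \<delta>"
    using iso_over_identity_iff_coboundary[OF \<gamma>_nonzero] by (simp add: \<delta>_def)
  ultimately show ?thesis
    using coboundary_iff_pairing_eq_1 by simp
qed

end
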